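(* Let $f:\mathcal{S}\to\mathbb{R}$ be continuously differentiable with $f^\star:=\inf_{X\in\mathcal{S}}f(X)>-\infty$, suppose $f$ is layer-wise $(L^0,L^1)$-smooth with constants $L^0,L^1\in\mathbb{R}^p_+$, and suppose $f$ satisfies the layer-wise Polyak–Łojasiewicz condition with constant $\mu>0$: $\sum_{i=1}^p\|\nabla_i f(X)\|^2_{(i)\star}\ge 2\mu(f(X)-f^\star)$ for all $X\in\mathcal{S}$. Fix $\varepsilon>0$ and let $X^0,X^1,\dots$ be the iterates of deterministic Gluon with radii $t_i^k=\frac{\|\nabla_i f(X^k)\|_{(i)\star}}{L^0_i+L^1_i\|\nabla_i f(X^k)\|_{(i)\star}}$ (assumed well defined, with $t_i^k:=0$ when $\nabla_i f(X^k)=0$). Let $\Delta^0:=f(X^0)-f^\star$, $L^0_{\max}:=\max_iL^0_i$, $L^1_{\max}:=\max_iL^1_i$. (1) With $K:=\left\lceil\frac{\Delta^0\sum_{i=1}^pL^0_i}{\mu\varepsilon}+\frac{\sqrt2L^1_{\max}\Delta^0}{\sqrt{\mu\varepsilon}}\right\rceil$ (provided $K\ge1$), $\min_{k=0,\dots,K-1}f(X^k)-f^\star\le\varepsilon$. (2) If $L^1_i=0$ for all $i=1,\dots,p$, then with $K:=\left\lceil\frac{L^0_{\max}}{\mu}\log\frac{\Delta^0}{\varepsilon}\right\rceil$, $f(X^K)-f^\star\le\varepsilon$.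
   Context: $\mathcal{S}=\mathcal{S}_1\times\cdots\times\mathcal{S}_p$ with $\mathcal{S}_i=\mathbb{R}^{m_i\times n_i}$; an element is written $X=[X_1,\dots,X_p]$. Each $\mathcal{S}_i$ carries the trace inner product $\langle X_i,Y_i\rangle_{(i)}=\operatorname{tr}(X_i^\top Y_i)$ and an arbitrary norm $\|\cdot\|_{(i)}$ with dual norm $\|Y_i\|_{(i)\star}=\sup_{\|Z_i\|_{(i)}\le 1}\langle Y_i,Z_i\rangle_{(i)}$. $\nabla_i f(X)$ is the gradient block corresponding to $X_i$. Layer-wise $(L^0,L^1)$-smoothness: for all $i$ and $X,Y\in\mathcal{S}$, $\|\nabla_i f(X)-\nabla_i f(Y)\|_{(i)\star}\le (L^0_i+L^1_i\|\nabla_i f(X)\|_{(i)\star})\|X_i-Y_i\|_{(i)}$. Deterministic Gluon: for each $k$ and $i$, $X_i^{k+1}\in\arg\min\{\langle \nabla_i f(X^k),X_i\rangle_{(i)}: \|X_i-X_i^k\|_{(i)}\le t_i^k\}$ (any minimizer), $X^{k+1}=[X_1^{k+1},\dots,X_p^{k+1}]$. $\log$ is the natural logarithm. *)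

theory Defs
  imports "HOL-Analysis.Analysis"
begin

text \<open>Matrices in R^(m x n) are represented as functions nat => nat => real
  vanishing outside the index range {..<m} x {..<n}.\<close>

definition matsp :: "nat \<Rightarrow> nat \<Rightarrow> (nat \<Rightarrow> nat \<Rightarrow> real) set" where
  "matsp m n = {A. \<forall>r c. \<not> (r < m \<and> c < n) \<longrightarrow> A r c = 0}"

text \<open>Trace inner product tr(A^T B), written out: (A^T B)_{cc} = sum_r A_rc B_rc.\<close>
definition trinner :: "nat \<Rightarrow> nat \<Rightarrow> (nat \<Rightarrow> nat \<Rightarrow> real) \<Rightarrow> (nat \<Rightarrow> nat \<Rightarrow> real) \<Rightarrow> real" where
  "trinner m n A B = (\<Sum>c<n. \<Sum>r<m. A r c * B r c)"

definition is_norm_on :: "(nat \<Rightarrow> nat \<Rightarrow> real) set \<Rightarrow> ((nat \<Rightarrow> nat \<Rightarrow> real) \<Rightarrow> real) \<Rightarrow> bool" where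
  "is_norm_on V N \<longleftrightarrow>
     (\<forall>A\<in>V. 0 \<le> N A) \<and>
     (\<forall>A\<in>V. N A = 0 \<longleftrightarrow> A = (\<lambda>_ _. 0)) \<and>
     (\<forall>A\<in>V. \<forall>a. N (\<lambda>r c. a * A r c) = \<bar>a\<bar> * N A) \<and>
     (\<forall>A\<in>V. \<forall>B\<in>V. N (\<lambda>r c. A r c + B r c) \<le> N A + N B)"

definition dualnorm :: "nat \<Rightarrow> nat \<Rightarrow> ((nat \<Rightarrow> nat \<Rightarrow> real) \<Rightarrow> real) \<Rightarrow> (nat \<Rightarrow> nat \<Rightarrow> real) \<Rightarrow> real" where
  "dualnorm m n N Y = (SUP Z\<in>{Z\<in>matsp m n. N Z \<le> 1}. trinner m n Y Z)"

text \<open>The product space S = S_1 x ... x S_p is represented as real^'d, where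
  idx i r c is the coordinate carrying entry (r,c) of block i; idx is a bijection from
  the valid triples onto the coordinates. The Euclidean inner product of real^'d
  then coincides with the sum of the blockwise trace inner products.\<close>

definition blk :: "(nat \<Rightarrow> nat \<Rightarrow> nat \<Rightarrow> 'd) \<Rightarrow> nat \<Rightarrow> nat \<Rightarrow> nat \<Rightarrow> (real ^ 'd) \<Rightarrow> (nat \<Rightarrow> nat \<Rightarrow> real)" where
  "blk idx m n i X = (\<lambda>r c. if r < m \<and> c < n then X $ idx i r c else 0)"

definition layout :: "nat \<Rightarrow> (nat \<Rightarrow> nat) \<Rightarrow> (nat \<Rightarrow> nat) \<Rightarrow> (nat \<Rightarrow> nat \<Rightarrow> nat \<Rightarrow> 'd::finite) \<Rightarrow> bool" where
  "layout p m n idx \<longleftrightarrow>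
     bij_betw (\<lambda>(i, r, c). idx i r c) {(i, r, c). i < p \<and> r < m i \<and> c < n i} (UNIV :: 'd set)"

end

theory Submission
  imports Defs
begin

text \<open>Each Gluon step minimises the linear model of f over a product of norm balls, so in
  layer i it gains t_i g_i, where g_i is the dual norm of the i-th block gradient, while the
  layer-wise (L0, L1) descent lemma charges (L0_i + L1_i g_i) t_i^2 / 2. With the prescribed
  radii t_i = g_i / (L0_i + L1_i g_i), f decreases by at least the sum over i of
  g_i^2 / (2 (L0_i + L1_i g_i)) per step. While the gap exceeds \<epsilon>, the PL inequality
  forces the sum of the g_i above E = sqrt (2 \<mu> \<epsilon>); evaluating the concave per-layer models
  at the common step E / (\<Sum> L0 + L1max E) shows that the gap then falls by at least
  \<mu> \<epsilon> / (\<Sum> L0 + L1max E) per step, which bounds the number of steps before it first reaches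
  \<epsilon>. When L1 = 0 the decrease is at least \<mu> / L0max times the gap, a linear rate.
  Dual norms are finite because every norm on a matrix space dominates the entries.\<close>

lemma sum_power2_le_power2_sum:
  fixes d :: "'a \<Rightarrow> real"
  assumes "finite A" and "\<And>i. i \<in> A \<Longrightarrow> 0 \<le> d i"
  shows "(\<Sum>i\<in>A. (d i)\<^sup>2) \<le> (\<Sum>i\<in>A. d i)\<^sup>2"
proof -
  have "(\<Sum>i\<in>A. (d i)\<^sup>2) = (\<Sum>i\<in>A. d i * d i)"
    by (simp add: power2_eq_square)
  also have "\<dots> \<le> (\<Sum>i\<in>A. d i * (\<Sum>j\<in>A. d j))"
    using assms by (intro sum_mono mult_left_mono member_le_sum) auto
  also have "\<dots> = (\<Sum>i\<in>A. d i)\<^sup>2"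
    by (simp add: power2_eq_square sum_distrib_right)
  finally show ?thesis .
qed

lemma linear_minus_quadratic_le:
  fixes s d b :: real
  assumes "0 \<le> b" and "b = 0 \<Longrightarrow> d = 0"
  shows "s * d - s\<^sup>2 * b / 2 \<le> d\<^sup>2 / (2 * b)"
proof (cases "b = 0")
  case False
  then have "d\<^sup>2 / (2 * b) - (s * d - s\<^sup>2 * b / 2) = (d - s * b)\<^sup>2 / (2 * b)"
    by (simp add: field_simps power2_eq_square)
  moreover have "0 \<le> (d - s * b)\<^sup>2 / (2 * b)"
    using assms by simp
  ultimately show ?thesis by linarith
qed (use assms in simp)

lemma positive_homogeneous_lower_bound:
  fixes g :: "'a::euclidean_space \<Rightarrow> real"
  assumes "closed W" and W_scale: "\<And>x a. x \<in> W \<Longrightarrow> a *\<^sub>R x \<in> W"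
    and continuous: "continuous_on UNIV g"
    and homogeneous: "\<And>x a. g (a *\<^sub>R x) = \<bar>a\<bar> * g x"
    and pos: "\<And>x. x \<in> W \<Longrightarrow> x \<noteq> 0 \<Longrightarrow> 0 < g x"
  obtains \<kappa> where "0 < \<kappa>" and "\<And>x. x \<in> W \<Longrightarrow> \<kappa> * norm x \<le> g x"
proof -
  let ?S = "sphere 0 1 \<inter> W"
  have g0: "g 0 = 0"
    using homogeneous[of 0 0] by simp
  have normalized: "(1 / norm x) *\<^sub>R x \<in> ?S" if "x \<in> W" "x \<noteq> 0" for x
    using that W_scale by simp
  show thesis
  proof (cases "?S = {}")
    case True
    then have W_trivial: "x = 0" if "x \<in> W" for x
      using normalized that by blast
    show thesis
    proof (rule that[of 1])
      fix x assume "x \<in> W"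
      then show "1 * norm x \<le> g x"
        using W_trivial[OF \<open>x \<in> W\<close>] g0 by simp
    qed simp
  next
    case False
    have "compact ?S"
      using \<open>closed W\<close> by (simp add: compact_Int_closed)
    then obtain x0 where x0: "x0 \<in> ?S" and x0_min: "\<And>y. y \<in> ?S \<Longrightarrow> g x0 \<le> g y"
      using continuous_attains_inf[OF _ False continuous_on_subset[OF continuous]] by blast
    have "x0 \<noteq> 0"
      using x0 by auto
    then have "0 < g x0"
      using x0 pos by blast
    moreover have "g x0 * norm x \<le> g x" if "x \<in> W" for x
    proof (cases "x = 0")
      case False
      have "g x0 \<le> g ((1 / norm x) *\<^sub>R x)"
        using x0_min normalized that False by blast
      also have "\<dots> = g x / norm x"
        by (simp add: homogeneous)
      finally show ?thesis
        using False by (simp add: field_simps)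
    qed (simp add: g0)
    ultimately show thesis
      using that by (simp add: mult.commute)
  qed
qed

lemma descent_lemma_along_segment:
  fixes f :: "'a::real_inner \<Rightarrow> real"
  assumes deriv: "\<And>z. (f has_derivative (\<lambda>h. grad z \<bullet> h)) (at z)"
    and increment: "\<And>t. 0 \<le> t \<Longrightarrow> t \<le> 1 \<Longrightarrow> (grad (x + t *\<^sub>R (y - x)) - grad x) \<bullet> (y - x) \<le> t * C"
  shows "f y \<le> f x + grad x \<bullet> (y - x) + C / 2"
proof -
  define \<psi> where "\<psi> = (\<lambda>t. f (x + t *\<^sub>R (y - x)) - t * (grad x \<bullet> (y - x)) - t\<^sup>2 / 2 * C)"
  have \<psi>_deriv: "DERIV \<psi> t :> grad (x + t *\<^sub>R (y - x)) \<bullet> (y - x) - grad x \<bullet> (y - x) - t * C" for t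
  proof -
    have "((\<lambda>t. x + t *\<^sub>R (y - x)) has_derivative (\<lambda>s. s *\<^sub>R (y - x))) (at t)"
      by (auto intro!: derivative_eq_intros)
    from has_derivative_compose[OF this deriv]
    have "DERIV (\<lambda>t. f (x + t *\<^sub>R (y - x))) t :> grad (x + t *\<^sub>R (y - x)) \<bullet> (y - x)"
      by (rule has_derivative_imp_has_field_derivative) simp
    then show ?thesis
      unfolding \<psi>_def by (auto intro!: derivative_eq_intros)
  qed
  have "\<psi> 1 \<le> \<psi> 0"
  proof (rule DERIV_nonpos_imp_nonincreasing[of 0 1])
    fix t :: real assume "0 \<le> t" "t \<le> 1"
    then show "\<exists>D. DERIV \<psi> t :> D \<and> D \<le> 0"
      using \<psi>_deriv[of t] increment[of t] by (auto simp: inner_diff_left)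
  qed simp
  then show ?thesis
    unfolding \<psi>_def by simp
qed

lemma uniform_decrease_reaches_level:
  fixes \<delta> :: "nat \<Rightarrow> real"
  assumes nonneg: "\<And>k. 0 \<le> \<delta> k"
    and decrease: "\<And>k. \<epsilon> < \<delta> k \<Longrightarrow> \<delta> (Suc k) < \<delta> k - c"
    and "0 < N" and "\<delta> 0 \<le> real N * c"
  shows "\<exists>k<N. \<delta> k \<le> \<epsilon>"
proof (rule ccontr)
  assume "\<not> ?thesis"
  then have above: "\<epsilon> < \<delta> k" if "k < N" for k
    using that not_le by blast
  have telescoped: "\<delta> k \<le> \<delta> 0 - real k * c" if "k \<le> N" for k
    using that
  proof (induction k)
    case (Suc k)
    then show ?case
      using decrease[OF above, of k] by (simp add: algebra_simps)
  qed simp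
  obtain M where "N = Suc M"
    using \<open>0 < N\<close> gr0_implies_Suc by blast
  then have "\<delta> N < \<delta> 0 - real N * c"
    using decrease[OF above, of M] telescoped[of M] by (simp add: algebra_simps)
  then show False
    using nonneg[of N] \<open>\<delta> 0 \<le> real N * c\<close> by linarith
qed

lemma contraction_exp_bound:
  fixes \<delta> :: "nat \<Rightarrow> real"
  assumes nonneg: "\<And>k. 0 \<le> \<delta> k" and contraction: "\<And>k. \<delta> (Suc k) \<le> (1 - a) * \<delta> k"
  shows "\<delta> k \<le> exp (- a * real k) * \<delta> 0"
proof (induction k)
  case (Suc k)
  have "\<delta> (Suc k) \<le> exp (- a) * \<delta> k"
    using contraction[of k] exp_ge_add_one_self[of "- a"] nonneg[of k]
    by (smt (verit) mult_right_mono)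
  also have "\<dots> \<le> exp (- a) * (exp (- a * real k) * \<delta> 0)"
    using Suc.IH by simp
  also have "\<dots> = exp (- a * real (Suc k)) * \<delta> 0"
    by (simp add: algebra_simps flip: exp_add)
  finally show ?case .
qed simp

lemma exp_decay_le:
  fixes a x \<epsilon> :: real
  assumes "0 < a" "0 < \<epsilon>" "0 \<le> x" and N: "ln (x / \<epsilon>) / a \<le> real N"
  shows "exp (- a * real N) * x \<le> \<epsilon>"
proof (cases "x \<le> \<epsilon>")
  case True
  have "exp (- a * real N) \<le> 1"
    using \<open>0 < a\<close> by simp
  then have "exp (- a * real N) * x \<le> 1 * x"
    by (rule mult_right_mono) (use \<open>0 \<le> x\<close> in simp)
  then show ?thesis
    using True by simp
next
  case False
  then have "0 < x"
    using \<open>0 < \<epsilon>\<close> by simp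
  have "ln (x / \<epsilon>) \<le> a * real N"
    using N \<open>0 < a\<close> by (simp add: pos_divide_le_eq mult.commute)
  then have "exp (- a * real N) \<le> exp (- ln (x / \<epsilon>))"
    by simp
  also have "\<dots> = \<epsilon> / x"
    using \<open>0 < x\<close> \<open>0 < \<epsilon>\<close> by (simp add: exp_minus)
  finally show ?thesis
    using \<open>0 < x\<close> by (simp add: pos_le_divide_eq)
qed

lemma pl_gain_lower_bound:
  fixes d b :: "nat \<Rightarrow> real" and A B E :: real
  assumes d_nonneg: "\<And>i. i < p \<Longrightarrow> 0 \<le> d i" and b_nonneg: "\<And>i. i < p \<Longrightarrow> 0 \<le> b i"
    and b_zero: "\<And>i. i < p \<Longrightarrow> b i = 0 \<Longrightarrow> d i = 0"
    and b_sum: "(\<Sum>i<p. b i) \<le> A + B * (\<Sum>i<p. d i)"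
    and "0 \<le> A" and "0 \<le> B" and "0 < E" and Q_pos: "0 < A + B * E"
    and E_less: "E\<^sup>2 < (\<Sum>i<p. (d i)\<^sup>2)"
  shows "E\<^sup>2 / (2 * (A + B * E)) < (\<Sum>i<p. (d i)\<^sup>2 / (2 * b i))"
proof -
  define D where "D = (\<Sum>i<p. d i)"
  define Q where "Q = A + B * E"
  define s where "s = E / Q"
  have "0 \<le> D"
    unfolding D_def using d_nonneg by (intro sum_nonneg) auto
  have "E\<^sup>2 < D\<^sup>2"
    using E_less sum_power2_le_power2_sum[of "{..<p}" d] d_nonneg unfolding D_def by simp
  then have "E < D"
    using \<open>0 \<le> D\<close> by (simp add: power_less_imp_less_base)
  have "0 < Q"
    using Q_pos by (simp add: Q_def)
  have "0 < s" and "s * B \<le> 1"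
    using \<open>0 \<le> A\<close> \<open>0 < E\<close> \<open>0 \<le> B\<close> Q_pos by (auto simp: s_def Q_def field_simps)
  \<comment> \<open>The gain is affine in D with positive slope s (1 - s B / 2); it is tight at D = E.\<close>
  have "E\<^sup>2 / (2 * Q) = s * E - s\<^sup>2 / 2 * Q"
    using \<open>0 < Q\<close> by (simp add: s_def field_simps power2_eq_square)
  also have "\<dots> < s * D - s\<^sup>2 / 2 * (A + B * D)"
  proof -
    have "s * D - s\<^sup>2 / 2 * (A + B * D) - (s * E - s\<^sup>2 / 2 * Q) = (D - E) * s * (1 - s * B / 2)"
      by (simp add: Q_def field_simps power2_eq_square)
    moreover have "0 < (D - E) * s * (1 - s * B / 2)"
      using \<open>E < D\<close> \<open>0 < s\<close> \<open>s * B \<le> 1\<close> by simp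
    ultimately show ?thesis by linarith
  qed
  also have "\<dots> \<le> s * D - s\<^sup>2 / 2 * (\<Sum>i<p. b i)"
    using b_sum unfolding D_def by (simp add: mult_left_mono)
  also have "\<dots> = (\<Sum>i<p. s * d i - s\<^sup>2 * b i / 2)"
    by (simp add: D_def sum_subtractf sum_distrib_left sum_distrib_right sum_divide_distrib mult.commute)
  also have "\<dots> \<le> (\<Sum>i<p. (d i)\<^sup>2 / (2 * b i))"
    using b_nonneg b_zero by (intro sum_mono linear_minus_quadratic_le) auto
  finally show ?thesis
    unfolding Q_def .
qed

lemma iteration_bound_eq:
  fixes \<mu> \<epsilon> A B x :: real
  assumes "0 < \<mu>" and "0 < \<epsilon>"
  shows "x * A / (\<mu> * \<epsilon>) + sqrt 2 * B * x / sqrt (\<mu> * \<epsilon>)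
    = x * (A + B * sqrt (2 * \<mu> * \<epsilon>)) / (\<mu> * \<epsilon>)"
proof -
  define r where "r = sqrt (\<mu> * \<epsilon>)"
  have "0 < r" and r_sq: "\<mu> * \<epsilon> = r * r"
    using assms by (simp_all add: r_def)
  have "sqrt (2 * \<mu> * \<epsilon>) = sqrt 2 * r"
    by (simp add: r_def real_sqrt_mult mult.assoc)
  then show ?thesis
    unfolding r_def[symmetric] r_sq using \<open>0 < r\<close> by (simp add: field_simps)
qed

section \<open>Norms and dual norms on matrix spaces\<close>

lemma blk_in_matsp: "blk idx m n i x \<in> matsp m n"
  by (simp add: matsp_def blk_def)

lemma matsp_diff: "A \<in> matsp m n \<Longrightarrow> B \<in> matsp m n \<Longrightarrow> (\<lambda>r c. A r c - B r c) \<in> matsp m n"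
  by (simp add: matsp_def)

lemma matsp_scale: "A \<in> matsp m n \<Longrightarrow> (\<lambda>r c. a * A r c) \<in> matsp m n"
  by (simp add: matsp_def)

lemma matsp_zero: "(\<lambda>_ _. 0) \<in> matsp m n"
  by (simp add: matsp_def)

lemma blk_diff: "blk idx m n i (x - y) = (\<lambda>r c. blk idx m n i x r c - blk idx m n i y r c)"
  by (auto simp: blk_def fun_eq_iff)

lemma blk_add: "blk idx m n i (x + y) = (\<lambda>r c. blk idx m n i x r c + blk idx m n i y r c)"
  by (auto simp: fun_eq_iff blk_def)

lemma blk_scaleR: "blk idx m n i (a *\<^sub>R x) = (\<lambda>r c. a * blk idx m n i x r c)"
  by (auto simp: fun_eq_iff blk_def)

lemma trinner_zero_left: "trinner m n (\<lambda>_ _. 0) Z = 0"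
  by (simp add: trinner_def)

lemma trinner_diff_right: "trinner m n G (\<lambda>r c. A r c - B r c) = trinner m n G A - trinner m n G B"
  by (simp add: trinner_def algebra_simps sum_subtractf)

lemma trinner_scale_right: "trinner m n G (\<lambda>r c. a * A r c) = a * trinner m n G A"
  by (simp add: trinner_def algebra_simps sum_distrib_left)

locale matrix_norm =
  fixes m n :: nat and N :: "(nat \<Rightarrow> nat \<Rightarrow> real) \<Rightarrow> real"
  assumes is_norm: "is_norm_on (matsp m n) N"
begin

lemma nonneg: "A \<in> matsp m n \<Longrightarrow> 0 \<le> N A"
  using is_norm by (simp add: is_norm_on_def)

lemma eq_0_iff: "A \<in> matsp m n \<Longrightarrow> N A = 0 \<longleftrightarrow> A = (\<lambda>_ _. 0)"
  using is_norm by (simp add: is_norm_on_def)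

lemma zero [simp]: "N (\<lambda>_ _. 0) = 0"
  using eq_0_iff[OF matsp_zero] by simp

lemma scale: "A \<in> matsp m n \<Longrightarrow> N (\<lambda>r c. a * A r c) = \<bar>a\<bar> * N A"
  using is_norm by (simp add: is_norm_on_def)

lemma triangle: "A \<in> matsp m n \<Longrightarrow> B \<in> matsp m n \<Longrightarrow> N (\<lambda>r c. A r c + B r c) \<le> N A + N B"
  using is_norm by (simp add: is_norm_on_def)

lemma dualnorm_zero: "dualnorm m n N (\<lambda>_ _. 0) = 0"
proof -
  have "{Z \<in> matsp m n. N Z \<le> 1} \<noteq> {}"
    using matsp_zero by fastforce
  then show ?thesis
    by (simp add: dualnorm_def trinner_zero_left)
qed

lemma convex_on_blk: "convex_on UNIV (\<lambda>x. N (blk idx m n i x))"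
proof
  fix t :: real and x y assume "0 < t" "t < 1"
  have "N (blk idx m n i ((1 - t) *\<^sub>R x + t *\<^sub>R y))
      \<le> N (\<lambda>r c. (1 - t) * blk idx m n i x r c) + N (\<lambda>r c. t * blk idx m n i y r c)"
    unfolding blk_add blk_scaleR by (intro triangle matsp_scale blk_in_matsp)
  also have "\<dots> = (1 - t) * N (blk idx m n i x) + t * N (blk idx m n i y)"
    using \<open>0 < t\<close> \<open>t < 1\<close> by (simp add: scale blk_in_matsp)
  finally show "N (blk idx m n i ((1 - t) *\<^sub>R x + t *\<^sub>R y))
      \<le> (1 - t) * N (blk idx m n i x) + t * N (blk idx m n i y)" .
qed simp

text \<open>Finite dimensionality enters only here: the entries of block i are coordinates of the
  Euclidean space real^'d, on whose unit sphere the norm of the block attains a positive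
  minimum.\<close>

lemma blk_norm_lower_bound:
  fixes idx :: "nat \<Rightarrow> nat \<Rightarrow> nat \<Rightarrow> 'd::finite" and i :: nat
  defines "W \<equiv> {x :: real ^ 'd. \<forall>j. j \<notin> (\<lambda>(r, c). idx i r c) ` ({..<m} \<times> {..<n}) \<longrightarrow> x $ j = 0}"
  shows "\<exists>\<kappa>>0. \<forall>x\<in>W. \<kappa> * norm x \<le> N (blk idx m n i x)"
proof -
  let ?e = "\<lambda>(r, c). idx i r c" and ?B = "{..<m} \<times> {..<n}"
  define \<nu> where "\<nu> x = N (blk idx m n i x)" for x :: "real ^ 'd"
  have closed: "closed W"
    unfolding W_def
    by (intro closed_Collect_all closed_Collect_imp) (auto intro!: closed_Collect_eq continuous_intros)
  have W_scale: "a *\<^sub>R x \<in> W" if "x \<in> W" for a x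
    using that by (simp add: W_def)
  have continuous: "continuous_on UNIV \<nu>"
    unfolding \<nu>_def by (rule convex_on_continuous[OF open_UNIV convex_on_blk])
  have homogeneous: "\<nu> (a *\<^sub>R x) = \<bar>a\<bar> * \<nu> x" for a x
    by (simp add: \<nu>_def blk_scaleR scale blk_in_matsp)
  have positive: "0 < \<nu> x" if "x \<in> W" "x \<noteq> 0" for x
  proof -
    have "blk idx m n i x \<noteq> (\<lambda>_ _. 0)"
    proof
      assume "blk idx m n i x = (\<lambda>_ _. 0)"
      then have "x $ idx i r c = 0" if "r < m" "c < n" for r c
        using that fun_cong[OF fun_cong[of _ _ r], of _ _ c] by (fastforce simp: blk_def)
      then have "x $ j = 0" for j
        using \<open>x \<in> W\<close> unfolding W_def by (cases "j \<in> ?e ` ?B") auto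
      then have "x = 0"
        by (simp add: vec_eq_iff)
      with \<open>x \<noteq> 0\<close> show False ..
    qed
    then have "\<nu> x \<noteq> 0"
      unfolding \<nu>_def using eq_0_iff[OF blk_in_matsp] by blast
    then show ?thesis
      unfolding \<nu>_def using nonneg[OF blk_in_matsp] by (simp add: less_le)
  qed
  obtain \<kappa> where "0 < \<kappa>" and "\<And>x. x \<in> W \<Longrightarrow> \<kappa> * norm x \<le> \<nu> x"
    using positive_homogeneous_lower_bound[OF closed W_scale continuous homogeneous positive] by blast
  then show ?thesis
    unfolding \<nu>_def by blast
qed

lemma coordinate_bound:
  fixes idx :: "nat \<Rightarrow> nat \<Rightarrow> nat \<Rightarrow> 'd::finite"
  assumes inj: "inj_on (\<lambda>(r, c). idx i r c) ({..<m} \<times> {..<n})"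
  shows "\<exists>C. \<forall>Z\<in>matsp m n. \<forall>r c. \<bar>Z r c\<bar> \<le> C * N Z"
proof -
  let ?e = "\<lambda>(r, c). idx i r c" and ?B = "{..<m} \<times> {..<n}"
  define W where "W = {x :: real ^ 'd. \<forall>j. j \<notin> ?e ` ?B \<longrightarrow> x $ j = 0}"
  obtain \<kappa> where "0 < \<kappa>" and lower: "\<And>x. x \<in> W \<Longrightarrow> \<kappa> * norm x \<le> N (blk idx m n i x)"
    using blk_norm_lower_bound[of idx i, folded W_def] by blast
  define emb where
    "emb Z = (\<chi> j. if j \<in> ?e ` ?B then case_prod Z (the_inv_into ?B ?e j) else 0)"
    for Z :: "nat \<Rightarrow> nat \<Rightarrow> real"
  have emb_at: "emb Z $ idx i r c = Z r c" if "r < m" "c < n" for Z r c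
    using the_inv_into_f_f[OF inj, of "(r, c)"] that by (force simp: emb_def)
  have emb_in_W: "emb Z \<in> W" for Z
    by (simp add: W_def emb_def)
  have blk_emb: "blk idx m n i (emb Z) = Z" if "Z \<in> matsp m n" for Z
    using that by (auto simp: fun_eq_iff blk_def emb_at matsp_def)
  have norm_emb: "\<kappa> * norm (emb Z) \<le> N Z" if "Z \<in> matsp m n" for Z
    using lower[OF emb_in_W, of Z] blk_emb[OF that] by simp
  show ?thesis
  proof (intro exI ballI allI)
    fix Z r c assume Z: "Z \<in> matsp m n"
    show "\<bar>Z r c\<bar> \<le> 1 / \<kappa> * N Z"
    proof (cases "r < m \<and> c < n")
      case True
      then have "\<bar>Z r c\<bar> \<le> norm (emb Z)"
        using component_le_norm_cart[of "emb Z" "idx i r c"] emb_at by simp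
      then have "\<kappa> * \<bar>Z r c\<bar> \<le> N Z"
        using norm_emb[OF Z] \<open>0 < \<kappa>\<close> by (smt (verit) mult_left_mono)
      then show ?thesis
        using \<open>0 < \<kappa>\<close> by (simp add: field_simps)
    next
      case False
      then show ?thesis
        using Z nonneg[OF Z] \<open>0 < \<kappa>\<close> by (simp add: matsp_def)
    qed
  qed
qed

lemma lmo_gain:
  assumes "0 \<le> t" and "Xi \<in> matsp m n"
    and argmin: "\<And>Z. Z \<in> matsp m n \<Longrightarrow> N (\<lambda>r c. Z r c - Xi r c) \<le> t \<Longrightarrow>
                      trinner m n G Xi' \<le> trinner m n G Z"
  shows "trinner m n G Xi' - trinner m n G Xi \<le> - t * dualnorm m n N G"
proof (cases "t = 0")
  case True
  then show ?thesis
    using argmin[OF \<open>Xi \<in> matsp m n\<close>] by simp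
next
  case False
  then have "0 < t"
    using \<open>0 \<le> t\<close> by simp
  have "{Z \<in> matsp m n. N Z \<le> 1} \<noteq> {}"
    using matsp_zero by fastforce
  then have "dualnorm m n N G \<le> (trinner m n G Xi - trinner m n G Xi') / t"
    unfolding dualnorm_def
  proof (rule cSUP_least)
    fix W assume W: "W \<in> {Z \<in> matsp m n. N Z \<le> 1}"
    \<comment> \<open>Test the minimality of Xi' against the point Xi - t W of the ball.\<close>
    define Z where "Z = (\<lambda>r c. Xi r c - t * W r c)"
    have "Z \<in> matsp m n"
      unfolding Z_def using W \<open>Xi \<in> matsp m n\<close> by (auto intro: matsp_diff matsp_scale)
    moreover have "N (\<lambda>r c. Z r c - Xi r c) \<le> t"
      using W scale[of W "- t"] \<open>0 < t\<close> by (simp add: Z_def mult_left_le)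
    ultimately have "trinner m n G Xi' \<le> trinner m n G Z"
      by (rule argmin)
    also have "\<dots> = trinner m n G Xi - t * trinner m n G W"
      unfolding Z_def trinner_diff_right trinner_scale_right ..
    finally show "trinner m n G W \<le> (trinner m n G Xi - trinner m n G Xi') / t"
      using \<open>0 < t\<close> by (simp add: field_simps)
  qed
  then show ?thesis
    using \<open>0 < t\<close> by (simp add: field_simps)
qed

end

locale coord_bounded_matrix_norm = matrix_norm +
  assumes coord_bounded: "\<exists>C. \<forall>Z\<in>matsp m n. \<forall>r c. \<bar>Z r c\<bar> \<le> C * N Z"
begin

lemma dualnorm_bdd_above: "bdd_above ((\<lambda>Z. trinner m n Y Z) ` {Z \<in> matsp m n. N Z \<le> 1})"
proof -
  obtain C where C: "\<And>Z r c. Z \<in> matsp m n \<Longrightarrow> \<bar>Z r c\<bar> \<le> C * N Z"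
    using coord_bounded by blast
  have "trinner m n Y Z \<le> (\<Sum>c<n. \<Sum>r<m. \<bar>Y r c\<bar> * max C 0)"
    if Z: "Z \<in> matsp m n" "N Z \<le> 1" for Z
  proof -
    have "\<bar>Z r c\<bar> \<le> max C 0" for r c
      using C[OF Z(1), of r c] mult_mono[OF _ Z(2), of C "max C 0"] nonneg[OF Z(1)] by auto
    then have "Y r c * Z r c \<le> \<bar>Y r c\<bar> * max C 0" for r c
      by (metis abs_ge_self abs_ge_zero abs_mult mult_left_mono order_trans)
    then show ?thesis
      unfolding trinner_def by (intro sum_mono)
  qed
  then show ?thesis
    by (intro bdd_aboveI2) blast
qed

lemma trinner_le_dualnorm: "Z \<in> matsp m n \<Longrightarrow> N Z \<le> 1 \<Longrightarrow> trinner m n Y Z \<le> dualnorm m n N Y"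
  unfolding dualnorm_def by (rule cSUP_upper[OF _ dualnorm_bdd_above]) simp

lemma dualnorm_nonneg: "0 \<le> dualnorm m n N Y"
  using trinner_le_dualnorm[OF matsp_zero] by (simp add: trinner_def)

lemma trinner_le_dualnorm_mult:
  assumes "Z \<in> matsp m n"
  shows "trinner m n Y Z \<le> dualnorm m n N Y * N Z"
proof (cases "N Z = 0")
  case True
  then show ?thesis
    using assms eq_0_iff by (simp add: trinner_def)
next
  case False
  then have "0 < N Z"
    using nonneg[OF assms] by simp
  have "N (\<lambda>r c. (1 / N Z) * Z r c) = 1"
    using scale[OF assms, of "1 / N Z"] \<open>0 < N Z\<close> by simp
  then have "trinner m n Y (\<lambda>r c. (1 / N Z) * Z r c) \<le> dualnorm m n N Y"
    by (intro trinner_le_dualnorm matsp_scale assms) simp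
  then have "trinner m n Y Z / N Z \<le> dualnorm m n N Y"
    by (simp only: trinner_scale_right) simp
  then show ?thesis
    using \<open>0 < N Z\<close> by (simp add: field_simps)
qed

lemma lmo_model_decrease:
  assumes "0 \<le> b" and "Xi \<in> matsp m n" and "Xi' \<in> matsp m n"
    and step: "N (\<lambda>r c. Xi' r c - Xi r c) \<le> dualnorm m n N G / b"
    and argmin: "\<And>Z. Z \<in> matsp m n \<Longrightarrow> N (\<lambda>r c. Z r c - Xi r c) \<le> dualnorm m n N G / b \<Longrightarrow>
                      trinner m n G Xi' \<le> trinner m n G Z"
  shows "trinner m n G (\<lambda>r c. Xi' r c - Xi r c) + b / 2 * (N (\<lambda>r c. Xi' r c - Xi r c))\<^sup>2
    \<le> - (dualnorm m n N G)\<^sup>2 / (2 * b)"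
proof -
  let ?d = "dualnorm m n N G" and ?D = "\<lambda>r c. Xi' r c - Xi r c"
  have "0 \<le> ?d / b"
    using \<open>0 \<le> b\<close> dualnorm_nonneg by simp
  then have "trinner m n G Xi' - trinner m n G Xi \<le> - (?d / b) * ?d"
    using \<open>Xi \<in> matsp m n\<close> argmin by (rule lmo_gain)
  then have "trinner m n G ?D \<le> - (?d / b) * ?d"
    by (simp only: trinner_diff_right)
  moreover have "(N ?D)\<^sup>2 \<le> (?d / b)\<^sup>2"
    using step nonneg[OF matsp_diff[OF \<open>Xi' \<in> matsp m n\<close> \<open>Xi \<in> matsp m n\<close>]]
    by (intro power_mono)
  ultimately have "trinner m n G ?D + b / 2 * (N ?D)\<^sup>2 \<le> - (?d / b) * ?d + b / 2 * (?d / b)\<^sup>2"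
    using \<open>0 \<le> b\<close> by (intro add_mono mult_left_mono) auto
  \<comment> \<open>For b = 0 the radius and the bound both vanish, since x / 0 = 0.\<close>
  also have "\<dots> = - ?d\<^sup>2 / (2 * b)"
    by (cases "b = 0") (simp_all add: field_simps power2_eq_square)
  finally show ?thesis .
qed

end

section \<open>The layered product space\<close>

locale block_layout =
  fixes p :: nat and m n :: "nat \<Rightarrow> nat" and idx :: "nat \<Rightarrow> nat \<Rightarrow> nat \<Rightarrow> 'd::finite"
    and nrm :: "nat \<Rightarrow> (nat \<Rightarrow> nat \<Rightarrow> real) \<Rightarrow> real"
  assumes lay: "layout p m n idx"
    and norms: "\<forall>i<p. is_norm_on (matsp (m i) (n i)) (nrm i)"
begin

abbreviation block :: "nat \<Rightarrow> real ^ 'd \<Rightarrow> nat \<Rightarrow> nat \<Rightarrow> real" where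
  "block i x \<equiv> blk idx (m i) (n i) i x"

abbreviation dual :: "nat \<Rightarrow> (nat \<Rightarrow> nat \<Rightarrow> real) \<Rightarrow> real" where
  "dual i Y \<equiv> dualnorm (m i) (n i) (nrm i) Y"

lemma block_norm:
  assumes "i < p"
  shows "coord_bounded_matrix_norm (m i) (n i) (nrm i)"
proof -
  interpret matrix_norm "m i" "n i" "nrm i"
    using norms assms by unfold_locales simp
  have "inj_on (\<lambda>(i, r, c). idx i r c) {(i, r, c). i < p \<and> r < m i \<and> c < n i}"
    using lay by (simp add: layout_def bij_betw_def)
  then have "inj_on (\<lambda>(r, c). idx i r c) ({..<m i} \<times> {..<n i})"
    using assms unfolding inj_on_def by fastforce
  then show ?thesis
    by unfold_locales (rule coordinate_bound)
qed

lemma inner_eq_sum_trinner: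
  "x \<bullet> y = (\<Sum>i<p. trinner (m i) (n i) (block i x) (block i y))"
proof -
  have "x \<bullet> y = (\<Sum>j\<in>UNIV. x $ j * y $ j)"
    by (simp add: inner_vec_def)
  also have "\<dots> = (\<Sum>(i, r, c)\<in>{(i, r, c). i < p \<and> r < m i \<and> c < n i}. x $ idx i r c * y $ idx i r c)"
    using sum.reindex_bij_betw[OF lay[unfolded layout_def], of "\<lambda>j. x $ j * y $ j"]
    by (simp add: case_prod_beta)
  also have "\<dots> = (\<Sum>(i, r, c)\<in>(SIGMA i:{..<p}. {..<m i} \<times> {..<n i}). x $ idx i r c * y $ idx i r c)"
    by (rule sum.cong) auto
  also have "\<dots> = (\<Sum>i<p. \<Sum>(r, c)\<in>{..<m i} \<times> {..<n i}. x $ idx i r c * y $ idx i r c)"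
    by (subst sum.Sigma) (auto simp: case_prod_beta)
  also have "\<dots> = (\<Sum>i<p. \<Sum>r<m i. \<Sum>c<n i. x $ idx i r c * y $ idx i r c)"
    by (simp add: sum.cartesian_product)
  also have "\<dots> = (\<Sum>i<p. trinner (m i) (n i) (block i x) (block i y))"
    by (simp add: trinner_def blk_def sum.swap[of _ "{..<m _}"])
  finally show ?thesis .
qed

lemma grad_increment_le:
  fixes grad :: "real ^ 'd \<Rightarrow> real ^ 'd"
  assumes "i < p" and "0 \<le> t" and "0 \<le> L0 i" and "0 \<le> L1 i"
    and smooth: "\<And>X Y. dual i (\<lambda>r c. block i (grad X) r c - block i (grad Y) r c)
        \<le> (L0 i + L1 i * dual i (block i (grad X))) * nrm i (\<lambda>r c. block i X r c - block i Y r c)"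
  shows "trinner (m i) (n i) (block i (grad (X + t *\<^sub>R (Y - X)) - grad X)) (block i (Y - X))
    \<le> t * ((L0 i + L1 i * dual i (block i (grad X))) * (nrm i (block i (Y - X)))\<^sup>2)"
proof -
  interpret coord_bounded_matrix_norm "m i" "n i" "nrm i"
    by (rule block_norm[OF \<open>i < p\<close>])
  let ?b = "L0 i + L1 i * dual i (block i (grad X))" and ?Xt = "X + t *\<^sub>R (Y - X)"
  have scaled: "nrm i (block i (a *\<^sub>R (Y - X))) = \<bar>a\<bar> * nrm i (block i (Y - X))" for a
    by (simp add: blk_scaleR scale blk_in_matsp)
  have "0 \<le> ?b"
    using assms dualnorm_nonneg by simp
  have "trinner (m i) (n i) (block i (grad ?Xt - grad X)) (block i (Y - X))
      = trinner (m i) (n i) (block i (grad X - grad ?Xt)) (block i (X - Y))"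
    unfolding trinner_def blk_def by (intro sum.cong refl) (simp add: algebra_simps)
  also have "\<dots> \<le> dual i (block i (grad X - grad ?Xt)) * nrm i (block i (X - Y))"
    by (rule trinner_le_dualnorm_mult[OF blk_in_matsp])
  also have "\<dots> = dual i (block i (grad X - grad ?Xt)) * nrm i (block i (Y - X))"
    using scaled[of "- 1"] by simp
  also have "\<dots> \<le> (?b * (t * nrm i (block i (Y - X)))) * nrm i (block i (Y - X))"
  proof (rule mult_right_mono)
    have "X - ?Xt = (- t) *\<^sub>R (Y - X)"
      by (simp add: algebra_simps)
    then have "nrm i (block i (X - ?Xt)) = t * nrm i (block i (Y - X))"
      using scaled[of "- t"] \<open>0 \<le> t\<close> by simp
    moreover have "dual i (block i (grad X - grad ?Xt)) \<le> ?b * nrm i (block i (X - ?Xt))"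
      using smooth[of X ?Xt] by (simp only: blk_diff)
    ultimately show "dual i (block i (grad X - grad ?Xt)) \<le> ?b * (t * nrm i (block i (Y - X)))"
      by simp
  qed (rule nonneg[OF blk_in_matsp])
  also have "\<dots> = t * (?b * (nrm i (block i (Y - X)))\<^sup>2)"
    by (simp add: power2_eq_square)
  finally show ?thesis .
qed

lemma layerwise_descent:
  fixes f :: "real ^ 'd \<Rightarrow> real" and grad :: "real ^ 'd \<Rightarrow> real ^ 'd"
  assumes deriv: "\<forall>X. (f has_derivative (\<lambda>h. grad X \<bullet> h)) (at X)"
    and L_nonneg: "\<forall>i<p. L0 i \<ge> 0 \<and> L1 i \<ge> 0"
    and smooth: "\<forall>i<p. \<forall>X Y. dual i (\<lambda>r c. block i (grad X) r c - block i (grad Y) r c)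
        \<le> (L0 i + L1 i * dual i (block i (grad X))) * nrm i (\<lambda>r c. block i X r c - block i Y r c)"
  shows "f Y \<le> f X + (\<Sum>i<p. trinner (m i) (n i) (block i (grad X)) (block i (Y - X))
      + (L0 i + L1 i * dual i (block i (grad X))) / 2 * (nrm i (block i (Y - X)))\<^sup>2)"
proof -
  let ?C = "\<Sum>i<p. (L0 i + L1 i * dual i (block i (grad X))) * (nrm i (block i (Y - X)))\<^sup>2"
  have "f Y \<le> f X + grad X \<bullet> (Y - X) + ?C / 2"
  proof (rule descent_lemma_along_segment)
    show "(f has_derivative (\<lambda>h. grad Z \<bullet> h)) (at Z)" for Z
      using deriv by blast
    fix t :: real assume "0 \<le> t" "t \<le> 1"
    have "(grad (X + t *\<^sub>R (Y - X)) - grad X) \<bullet> (Y - X)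
        = (\<Sum>i<p. trinner (m i) (n i) (block i (grad (X + t *\<^sub>R (Y - X)) - grad X)) (block i (Y - X)))"
      by (rule inner_eq_sum_trinner)
    also have "\<dots> \<le> (\<Sum>i<p. t * ((L0 i + L1 i * dual i (block i (grad X))) * (nrm i (block i (Y - X)))\<^sup>2))"
      using L_nonneg smooth \<open>0 \<le> t\<close> by (intro sum_mono grad_increment_le) auto
    also have "\<dots> = t * ?C"
      by (simp add: sum_distrib_left)
    finally show "(grad (X + t *\<^sub>R (Y - X)) - grad X) \<bullet> (Y - X) \<le> t * ?C" .
  qed
  also have "grad X \<bullet> (Y - X) = (\<Sum>i<p. trinner (m i) (n i) (block i (grad X)) (block i (Y - X)))"
    by (rule inner_eq_sum_trinner)
  finally show ?thesis
    by (simp add: sum.distrib sum_divide_distrib)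
qed

end

section \<open>Convergence of deterministic Gluon\<close>

locale gluon_run = block_layout p m n idx nrm
  for p :: nat and m n :: "nat \<Rightarrow> nat" and idx :: "nat \<Rightarrow> nat \<Rightarrow> nat \<Rightarrow> 'd::finite"
    and nrm :: "nat \<Rightarrow> (nat \<Rightarrow> nat \<Rightarrow> real) \<Rightarrow> real" +
  fixes f :: "real ^ 'd \<Rightarrow> real" and grad :: "real ^ 'd \<Rightarrow> real ^ 'd"
    and L0 L1 :: "nat \<Rightarrow> real" and \<mu> :: real and Xs :: "nat \<Rightarrow> real ^ 'd"
  assumes deriv: "\<forall>X. (f has_derivative (\<lambda>h. grad X \<bullet> h)) (at X)"
    and bdd: "bdd_below (range f)"
    and L_nonneg: "\<forall>i<p. L0 i \<ge> 0 \<and> L1 i \<ge> 0"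
    and smooth: "\<forall>i<p. \<forall>X Y.
        dualnorm (m i) (n i) (nrm i)
          (\<lambda>r c. blk idx (m i) (n i) i (grad X) r c - blk idx (m i) (n i) i (grad Y) r c)
        \<le> (L0 i + L1 i * dualnorm (m i) (n i) (nrm i) (blk idx (m i) (n i) i (grad X)))
           * nrm i (\<lambda>r c. blk idx (m i) (n i) i X r c - blk idx (m i) (n i) i Y r c)"
    and mu_pos: "\<mu> > 0"
    and PL: "\<forall>X. (\<Sum>i<p. (dualnorm (m i) (n i) (nrm i) (blk idx (m i) (n i) i (grad X)))\<^sup>2)
                 \<ge> 2 * \<mu> * (f X - Inf (range f))"
    and well_def: "\<forall>k. \<forall>i<p. blk idx (m i) (n i) i (grad (Xs k)) \<noteq> (\<lambda>_ _. 0) \<longrightarrow>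
        L0 i + L1 i * dualnorm (m i) (n i) (nrm i) (blk idx (m i) (n i) i (grad (Xs k))) > 0"
    and gluon: "\<forall>k. \<forall>i<p.
        (let G = blk idx (m i) (n i) i (grad (Xs k));
             d = dualnorm (m i) (n i) (nrm i) G;
             t = (if G = (\<lambda>_ _. 0) then 0 else d / (L0 i + L1 i * d));
             Xi = blk idx (m i) (n i) i (Xs k);
             Xi' = blk idx (m i) (n i) i (Xs (Suc k))
         in nrm i (\<lambda>r c. Xi' r c - Xi r c) \<le> t \<and>
            (\<forall>Z\<in>matsp (m i) (n i). nrm i (\<lambda>r c. Z r c - Xi r c) \<le> t \<longrightarrow>
                 trinner (m i) (n i) G Xi' \<le> trinner (m i) (n i) G Z))"
begin

abbreviation gap :: "nat \<Rightarrow> real" where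
  "gap k \<equiv> f (Xs k) - Inf (range f)"

abbreviation gnorm :: "nat \<Rightarrow> nat \<Rightarrow> real" where
  "gnorm i k \<equiv> dual i (block i (grad (Xs k)))"

abbreviation lcoef :: "nat \<Rightarrow> nat \<Rightarrow> real" where
  "lcoef i k \<equiv> L0 i + L1 i * gnorm i k"

lemma gap_nonneg: "0 \<le> gap k"
  using cInf_lower[OF rangeI bdd] by simp

lemma gnorm_nonneg: "i < p \<Longrightarrow> 0 \<le> gnorm i k"
  by (rule coord_bounded_matrix_norm.dualnorm_nonneg[OF block_norm])

lemma lcoef_nonneg: "i < p \<Longrightarrow> 0 \<le> lcoef i k"
  using L_nonneg gnorm_nonneg by simp

lemma gnorm_eq_0_if_block_eq_0: "i < p \<Longrightarrow> block i (grad (Xs k)) = (\<lambda>_ _. 0) \<Longrightarrow> gnorm i k = 0"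
  using coord_bounded_matrix_norm.axioms(1)[OF block_norm] matrix_norm.dualnorm_zero by fastforce

lemma gnorm_eq_0_if_lcoef_eq_0: "i < p \<Longrightarrow> lcoef i k = 0 \<Longrightarrow> gnorm i k = 0"
  using well_def gnorm_eq_0_if_block_eq_0 by fastforce

text \<open>A vanishing block gradient has vanishing dual norm, so the radius of the method is
  gnorm / lcoef in all cases.\<close>

lemma gluon_lmo_step:
  assumes "i < p"
  shows "nrm i (\<lambda>r c. block i (Xs (Suc k)) r c - block i (Xs k) r c) \<le> gnorm i k / lcoef i k"
    and "\<And>Z. Z \<in> matsp (m i) (n i) \<Longrightarrow>
      nrm i (\<lambda>r c. Z r c - block i (Xs k) r c) \<le> gnorm i k / lcoef i k \<Longrightarrow>
      trinner (m i) (n i) (block i (grad (Xs k))) (block i (Xs (Suc k)))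
        \<le> trinner (m i) (n i) (block i (grad (Xs k))) Z"
proof -
  have radius: "(if block i (grad (Xs k)) = (\<lambda>_ _. 0) then 0 else gnorm i k / lcoef i k)
      = gnorm i k / lcoef i k"
    using gnorm_eq_0_if_block_eq_0[OF assms] by simp
  show "nrm i (\<lambda>r c. block i (Xs (Suc k)) r c - block i (Xs k) r c) \<le> gnorm i k / lcoef i k"
    and "\<And>Z. Z \<in> matsp (m i) (n i) \<Longrightarrow>
      nrm i (\<lambda>r c. Z r c - block i (Xs k) r c) \<le> gnorm i k / lcoef i k \<Longrightarrow>
      trinner (m i) (n i) (block i (grad (Xs k))) (block i (Xs (Suc k)))
        \<le> trinner (m i) (n i) (block i (grad (Xs k))) Z"
    using gluon[rule_format, of i k] assms unfolding Let_def radius by blast+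
qed

lemma gap_decrease: "gap (Suc k) \<le> gap k - (\<Sum>i<p. (gnorm i k)\<^sup>2 / (2 * lcoef i k))"
proof -
  have "f (Xs (Suc k)) \<le> f (Xs k) + (\<Sum>i<p.
      trinner (m i) (n i) (block i (grad (Xs k))) (block i (Xs (Suc k) - Xs k))
      + lcoef i k / 2 * (nrm i (block i (Xs (Suc k) - Xs k)))\<^sup>2)"
    by (rule layerwise_descent[OF deriv L_nonneg smooth])
  also have "\<dots> \<le> f (Xs k) + (\<Sum>i<p. - (gnorm i k)\<^sup>2 / (2 * lcoef i k))"
  proof (intro add_left_mono sum_mono)
    fix i assume "i \<in> {..<p}"
    then have "i < p" by simp
    interpret coord_bounded_matrix_norm "m i" "n i" "nrm i"
      by (rule block_norm[OF \<open>i < p\<close>])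
    show "trinner (m i) (n i) (block i (grad (Xs k))) (block i (Xs (Suc k) - Xs k))
      + lcoef i k / 2 * (nrm i (block i (Xs (Suc k) - Xs k)))\<^sup>2 \<le> - (gnorm i k)\<^sup>2 / (2 * lcoef i k)"
      unfolding blk_diff
      using lcoef_nonneg[OF \<open>i < p\<close>] gluon_lmo_step[OF \<open>i < p\<close>]
      by (intro lmo_model_decrease blk_in_matsp) auto
  qed
  finally show ?thesis
    by (simp add: sum_negf)
qed

lemma gap_decrease_above_level:
  fixes \<epsilon> :: real
  defines "Q \<equiv> (\<Sum>i<p. L0 i) + Max (L1 ` {..<p}) * sqrt (2 * \<mu> * \<epsilon>)"
  assumes "1 \<le> p" and "0 < \<epsilon>" and "0 < Q" and "\<epsilon> < gap k"
  shows "gap (Suc k) < gap k - \<mu> * \<epsilon> / Q"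
proof -
  define B where "B = Max (L1 ` {..<p})"
  define E where "E = sqrt (2 * \<mu> * \<epsilon>)"
  have L1_le_B: "L1 i \<le> B" if "i < p" for i
    using that by (simp add: B_def)
  then have "0 \<le> B"
    using L_nonneg \<open>1 \<le> p\<close> by force
  have "0 < E" and E_sq: "E\<^sup>2 = 2 * \<mu> * \<epsilon>"
    using mu_pos \<open>0 < \<epsilon>\<close> by (simp_all add: E_def)
  have "E\<^sup>2 < 2 * \<mu> * gap k"
    using \<open>\<epsilon> < gap k\<close> mu_pos E_sq by simp
  also have "\<dots> \<le> (\<Sum>i<p. (gnorm i k)\<^sup>2)"
    using PL by simp
  finally have E_less: "E\<^sup>2 < (\<Sum>i<p. (gnorm i k)\<^sup>2)" .
  have "(\<Sum>i<p. L1 i * gnorm i k) \<le> (\<Sum>i<p. B * gnorm i k)"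
    using L1_le_B gnorm_nonneg by (intro sum_mono mult_right_mono) auto
  then have lcoef_sum: "(\<Sum>i<p. lcoef i k) \<le> (\<Sum>i<p. L0 i) + B * (\<Sum>i<p. gnorm i k)"
    by (simp add: sum.distrib sum_distrib_left)
  have "0 \<le> (\<Sum>i<p. L0 i)"
    by (rule sum_nonneg) (use L_nonneg in auto)
  moreover have Q_eq: "Q = (\<Sum>i<p. L0 i) + B * E"
    by (simp add: Q_def B_def E_def)
  ultimately have "E\<^sup>2 / (2 * Q) < (\<Sum>i<p. (gnorm i k)\<^sup>2 / (2 * lcoef i k))"
    using E_less lcoef_sum gnorm_nonneg lcoef_nonneg gnorm_eq_0_if_lcoef_eq_0 \<open>0 \<le> B\<close> \<open>0 < E\<close>
      \<open>0 < Q\<close>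
    unfolding Q_eq by (intro pl_gain_lower_bound) auto
  moreover have "E\<^sup>2 / (2 * Q) = \<mu> * \<epsilon> / Q"
    by (simp add: E_sq)
  ultimately show ?thesis
    using gap_decrease[of k] by linarith
qed

lemma sublinear_rate:
  fixes \<epsilon> :: real
  assumes "1 \<le> p" and "0 < \<epsilon>"
    and K_pos: "1 \<le> \<lceil>gap 0 * (\<Sum>i<p. L0 i) / (\<mu> * \<epsilon>)
                     + sqrt 2 * Max (L1 ` {..<p}) * gap 0 / sqrt (\<mu> * \<epsilon>)\<rceil>"
  shows "(MIN k\<in>{0..<nat \<lceil>gap 0 * (\<Sum>i<p. L0 i) / (\<mu> * \<epsilon>)
                     + sqrt 2 * Max (L1 ` {..<p}) * gap 0 / sqrt (\<mu> * \<epsilon>)\<rceil>}. f (Xs k))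
           - Inf (range f) \<le> \<epsilon>"
proof -
  define Q where "Q = (\<Sum>i<p. L0 i) + Max (L1 ` {..<p}) * sqrt (2 * \<mu> * \<epsilon>)"
  define N where "N = nat \<lceil>gap 0 * (\<Sum>i<p. L0 i) / (\<mu> * \<epsilon>)
                     + sqrt 2 * Max (L1 ` {..<p}) * gap 0 / sqrt (\<mu> * \<epsilon>)\<rceil>"
  have N_eq: "N = nat \<lceil>gap 0 * Q / (\<mu> * \<epsilon>)\<rceil>"
    unfolding N_def Q_def using iteration_bound_eq[OF mu_pos \<open>0 < \<epsilon>\<close>] by simp
  have "0 < N"
    using K_pos by (simp add: N_def)
  have "0 < \<mu> * \<epsilon>"
    using mu_pos \<open>0 < \<epsilon>\<close> by simp
  with \<open>0 < N\<close> have "0 < gap 0 * Q"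
    unfolding N_eq by (simp add: zero_less_divide_iff)
  then have "0 < Q"
    using gap_nonneg[of 0] by (simp add: zero_less_mult_iff)
  have "gap 0 * Q / (\<mu> * \<epsilon>) \<le> real N"
    unfolding N_eq by (rule of_nat_ceiling)
  then have "gap 0 \<le> real N * (\<mu> * \<epsilon> / Q)"
    using mu_pos \<open>0 < \<epsilon>\<close> \<open>0 < Q\<close> by (simp add: field_simps)
  with \<open>0 < N\<close> obtain k where "k < N" and "gap k \<le> \<epsilon>"
    using uniform_decrease_reaches_level[of "\<lambda>k. gap k" \<epsilon> "\<mu> * \<epsilon> / Q" N]
      gap_nonneg gap_decrease_above_level[OF \<open>1 \<le> p\<close> \<open>0 < \<epsilon>\<close>] \<open>0 < Q\<close>
    unfolding Q_def by blast
  then have "(MIN j\<in>{0..<N}. f (Xs j)) \<le> f (Xs k)"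
    by (intro Min_le) auto
  then show ?thesis
    using \<open>gap k \<le> \<epsilon>\<close> unfolding N_def by linarith
qed

lemma gap_contraction_if_L1_zero:
  defines "L \<equiv> Max (L0 ` {..<p})"
  assumes L1_zero: "\<forall>i<p. L1 i = 0" and "0 < L"
  shows "gap (Suc k) \<le> (1 - \<mu> / L) * gap k"
proof -
  have termwise: "(gnorm i k)\<^sup>2 / (2 * L) \<le> (gnorm i k)\<^sup>2 / (2 * lcoef i k)" if "i < p" for i
  proof (cases "lcoef i k = 0")
    case True
    then show ?thesis
      using gnorm_eq_0_if_lcoef_eq_0[OF that True] by simp
  next
    case False
    moreover have "L0 i \<le> L"
      using that by (simp add: L_def)
    ultimately show ?thesis
      using lcoef_nonneg[OF that] L1_zero that by (intro divide_left_mono) auto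
  qed
  have "\<mu> / L * gap k = 2 * \<mu> * gap k / (2 * L)"
    by simp
  also have "\<dots> \<le> (\<Sum>i<p. (gnorm i k)\<^sup>2) / (2 * L)"
    using PL \<open>0 < L\<close> by (intro divide_right_mono) auto
  also have "\<dots> \<le> (\<Sum>i<p. (gnorm i k)\<^sup>2 / (2 * lcoef i k))"
    unfolding sum_divide_distrib by (rule sum_mono) (use termwise in simp)
  finally have "\<mu> / L * gap k \<le> (\<Sum>i<p. (gnorm i k)\<^sup>2 / (2 * lcoef i k))" .
  moreover have "(1 - \<mu> / L) * gap k = gap k - \<mu> / L * gap k"
    by (simp add: algebra_simps)
  ultimately show ?thesis
    using gap_decrease[of k] by linarith
qed

lemma linear_rate_if_L1_zero:
  fixes \<epsilon> :: real
  assumes "0 < \<epsilon>" and L1_zero: "\<forall>i<p. L1 i = 0"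
  shows "gap (nat \<lceil>Max (L0 ` {..<p}) / \<mu> * ln (gap 0 / \<epsilon>)\<rceil>) \<le> \<epsilon>"
proof (cases "0 < Max (L0 ` {..<p})")
  case True
  define L where "L = Max (L0 ` {..<p})"
  define N where "N = nat \<lceil>L / \<mu> * ln (gap 0 / \<epsilon>)\<rceil>"
  have "gap N \<le> exp (- (\<mu> / L) * real N) * gap 0"
    using gap_nonneg gap_contraction_if_L1_zero[OF L1_zero True] unfolding L_def
    by (rule contraction_exp_bound)
  also have "\<dots> \<le> \<epsilon>"
  proof (rule exp_decay_le)
    have "ln (gap 0 / \<epsilon>) / (\<mu> / L) = L / \<mu> * ln (gap 0 / \<epsilon>)"
      by (simp add: mult.commute)
    also have "\<dots> \<le> real N"
      unfolding N_def by (rule of_nat_ceiling)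
    finally show "ln (gap 0 / \<epsilon>) / (\<mu> / L) \<le> real N" .
  qed (use mu_pos True \<open>0 < \<epsilon>\<close> gap_nonneg in \<open>auto simp: L_def\<close>)
  finally show ?thesis
    unfolding N_def L_def .
next
  case False
  have "L0 i = 0" if "i < p" for i
  proof -
    have "L0 i \<le> Max (L0 ` {..<p})"
      using that by simp
    then show ?thesis
      using False L_nonneg[rule_format, OF that] by linarith
  qed
  then have "gnorm i k = 0" if "i < p" for i k
    using gnorm_eq_0_if_lcoef_eq_0 L1_zero that by simp
  then have "(\<Sum>i<p. (gnorm i k)\<^sup>2) = 0" for k
    by simp
  then have "2 * \<mu> * gap k \<le> 0" for k
    using PL[rule_format, of "Xs k"] by simp
  then show ?thesis
    using mu_pos \<open>0 < \<epsilon>\<close> by (smt (verit) mult_pos_pos gap_nonneg)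
qed

end

theorem theorem4:
  fixes p :: nat and m n :: "nat \<Rightarrow> nat"
    and idx :: "nat \<Rightarrow> nat \<Rightarrow> nat \<Rightarrow> 'd::finite"
    and nrm :: "nat \<Rightarrow> (nat \<Rightarrow> nat \<Rightarrow> real) \<Rightarrow> real"
    and f :: "real ^ 'd \<Rightarrow> real" and grad :: "real ^ 'd \<Rightarrow> real ^ 'd"
    and L0 L1 :: "nat \<Rightarrow> real" and \<mu> \<epsilon> :: real
    and Xs :: "nat \<Rightarrow> real ^ 'd"
  assumes p_pos: "p \<ge> 1"
    and lay: "layout p m n idx"
    and norms: "\<forall>i<p. is_norm_on (matsp (m i) (n i)) (nrm i)"
    and deriv: "\<forall>X. (f has_derivative (\<lambda>h. grad X \<bullet> h)) (at X)"
    and C1: "continuous_on UNIV grad"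
    and bdd: "bdd_below (range f)"
    and L_nonneg: "\<forall>i<p. L0 i \<ge> 0 \<and> L1 i \<ge> 0"
    and smooth: "\<forall>i<p. \<forall>X Y.
        dualnorm (m i) (n i) (nrm i)
          (\<lambda>r c. blk idx (m i) (n i) i (grad X) r c - blk idx (m i) (n i) i (grad Y) r c)
        \<le> (L0 i + L1 i * dualnorm (m i) (n i) (nrm i) (blk idx (m i) (n i) i (grad X)))
           * nrm i (\<lambda>r c. blk idx (m i) (n i) i X r c - blk idx (m i) (n i) i Y r c)"
    and mu_pos: "\<mu> > 0"
    and PL: "\<forall>X. (\<Sum>i<p. (dualnorm (m i) (n i) (nrm i) (blk idx (m i) (n i) i (grad X)))\<^sup>2)
                 \<ge> 2 * \<mu> * (f X - Inf (range f))"
    and eps_pos: "\<epsilon> > 0"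
    and well_def: "\<forall>k. \<forall>i<p. blk idx (m i) (n i) i (grad (Xs k)) \<noteq> (\<lambda>_ _. 0) \<longrightarrow>
        L0 i + L1 i * dualnorm (m i) (n i) (nrm i) (blk idx (m i) (n i) i (grad (Xs k))) > 0"
    and gluon: "\<forall>k. \<forall>i<p.
        (let G = blk idx (m i) (n i) i (grad (Xs k));
             d = dualnorm (m i) (n i) (nrm i) G;
             t = (if G = (\<lambda>_ _. 0) then 0 else d / (L0 i + L1 i * d));
             Xi = blk idx (m i) (n i) i (Xs k);
             Xi' = blk idx (m i) (n i) i (Xs (Suc k))
         in nrm i (\<lambda>r c. Xi' r c - Xi r c) \<le> t \<and>
            (\<forall>Z\<in>matsp (m i) (n i). nrm i (\<lambda>r c. Z r c - Xi r c) \<le> t \<longrightarrow>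
                 trinner (m i) (n i) G Xi' \<le> trinner (m i) (n i) G Z))"
  shows
    "(let fstar = Inf (range f);
          \<Delta>0 = f (Xs 0) - fstar;
          L1max = Max (L1 ` {..<p});
          K = \<lceil>\<Delta>0 * (\<Sum>i<p. L0 i) / (\<mu> * \<epsilon>) + sqrt 2 * L1max * \<Delta>0 / sqrt (\<mu> * \<epsilon>)\<rceil>
      in K \<ge> 1 \<longrightarrow> (MIN k\<in>{0..<nat K}. f (Xs k)) - fstar \<le> \<epsilon>)
   \<and> ((\<forall>i<p. L1 i = 0) \<longrightarrow>
      (let fstar = Inf (range f);
           \<Delta>0 = f (Xs 0) - fstar;
           L0max = Max (L0 ` {..<p});
           K = \<lceil>L0max / \<mu> * ln (\<Delta>0 / \<epsilon>)\<rceil>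
       in f (Xs (nat K)) - fstar \<le> \<epsilon>))"
proof -
  interpret gluon_run p m n idx nrm f grad L0 L1 \<mu> Xs
    by unfold_locales (fact lay norms deriv bdd L_nonneg smooth mu_pos PL well_def gluon)+
  show ?thesis
    unfolding Let_def
    using sublinear_rate[OF p_pos eps_pos] linear_rate_if_L1_zero[OF eps_pos] by blast
qed

end
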